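(* Let $B$ be a skew left brace with associated solution $r_B(a,b)=(\lambda_a(b),\lambda_a(b)^{-1}ab)$, and let $I$ be a proper ideal of $B$ such that $B/I$ is an abelian brace. Let $\mathcal P$ be the set of all left cosets $bI$ ($b\in B$) of $I$ in $B$. Then $(B,r_B)$ is uniformly $\mathcal P$-decomposable, i.e. $r_B(bI\times b'I)=b'I\times bI$ for all $b,b'\in B$. In particular, if $B$ is finite and $|B:I|=n$, then $(B,r_B)$ is uniformly $n$-decomposable.
   Context: A skew left brace (brace) is a set $B$ with two group structures $(B,+)$ and $(B,\cdot)$ with $a(b+c)=ab-a+ac$; $\lambda_a(b)=-a+ab$. An ideal is a subset that is a normal subgroup of both groups and $\lambda_b$-invariant for all $b$ (so its left cosets with respect to $\cdot$ and $+$ coincide). A brace is abelian if $xy=x+y=y+x$ for all elements. A partition is uniform if all blocks have the same cardinality. For a partition $\mathcal P=\{X_i\}$ of $X$, a solution $(X,r)$ is uniformly $\mathcal P$-decomposable if $\mathcal P$ is uniform and $r(X_i\times X_j)=X_j\times X_i$ for all $i,j$; it is uniformly $n$-decomposable if this holds for some uniform partition into $n\ge2$ blocks. *)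

theory Defs
  imports "HOL-Algebra.Algebra" "HOL-Library.Disjoint_Sets" "HOL-Library.Equipollence"
begin

text \<open>A skew left brace: a carrier with an additive group A (written with the
HOL-Algebra product of A) and a multiplicative group M on the same carrier, satisfying
a(b+c) = ab - a + ac.\<close>
definition skew_brace :: "'a monoid \<Rightarrow> 'a monoid \<Rightarrow> bool" where
  "skew_brace A M \<longleftrightarrow> group A \<and> group M \<and> carrier A = carrier M \<and>
     (\<forall>a\<in>carrier A. \<forall>b\<in>carrier A. \<forall>c\<in>carrier A.
        a \<otimes>\<^bsub>M\<^esub> (b \<otimes>\<^bsub>A\<^esub> c)
          = ((a \<otimes>\<^bsub>M\<^esub> b) \<otimes>\<^bsub>A\<^esub> inv\<^bsub>A\<^esub> a) \<otimes>\<^bsub>A\<^esub> (a \<otimes>\<^bsub>M\<^esub> c))"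

definition brace_lambda :: "'a monoid \<Rightarrow> 'a monoid \<Rightarrow> 'a \<Rightarrow> 'a \<Rightarrow> 'a" where
  "brace_lambda A M a b = inv\<^bsub>A\<^esub> a \<otimes>\<^bsub>A\<^esub> (a \<otimes>\<^bsub>M\<^esub> b)"

definition brace_solution :: "'a monoid \<Rightarrow> 'a monoid \<Rightarrow> 'a \<times> 'a \<Rightarrow> 'a \<times> 'a" where
  "brace_solution A M = (\<lambda>(a, b).
     (brace_lambda A M a b,
      (inv\<^bsub>M\<^esub> (brace_lambda A M a b) \<otimes>\<^bsub>M\<^esub> a) \<otimes>\<^bsub>M\<^esub> b))"

definition brace_ideal :: "'a monoid \<Rightarrow> 'a monoid \<Rightarrow> 'a set \<Rightarrow> bool" where
  "brace_ideal A M I \<longleftrightarrow> normal I A \<and> normal I M \<and>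
     (\<forall>b\<in>carrier A. brace_lambda A M b ` I \<subseteq> I)"

definition abelian_brace :: "'a monoid \<Rightarrow> 'a monoid \<Rightarrow> bool" where
  "abelian_brace A M \<longleftrightarrow> (\<forall>x\<in>carrier A. \<forall>y\<in>carrier A.
     x \<otimes>\<^bsub>M\<^esub> y = x \<otimes>\<^bsub>A\<^esub> y \<and> x \<otimes>\<^bsub>A\<^esub> y = y \<otimes>\<^bsub>A\<^esub> x)"

definition uniform_partition :: "'a set \<Rightarrow> 'a set set \<Rightarrow> bool" where
  "uniform_partition S Q \<longleftrightarrow> partition_on S Q \<and> (\<forall>U\<in>Q. \<forall>V\<in>Q. eqpoll U V)"

definition uniformly_P_decomposable ::
    "'a set \<Rightarrow> ('a \<times> 'a \<Rightarrow> 'a \<times> 'a) \<Rightarrow> 'a set set \<Rightarrow> bool" where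
  "uniformly_P_decomposable S f Q \<longleftrightarrow> uniform_partition S Q \<and>
     (\<forall>U\<in>Q. \<forall>V\<in>Q. f ` (U \<times> V) = V \<times> U)"

definition uniformly_n_decomposable ::
    "'a set \<Rightarrow> ('a \<times> 'a \<Rightarrow> 'a \<times> 'a) \<Rightarrow> nat \<Rightarrow> bool" where
  "uniformly_n_decomposable S f n \<longleftrightarrow> n \<ge> 2 \<and>
     (\<exists>Q. finite Q \<and> card Q = n \<and> uniformly_P_decomposable S f Q)"

end

theory Submission
  imports Defs
begin

text \<open>An ideal \<open>I\<close> has the same left cosets in the additive and in the multiplicative
group, so its cosets \<open>bI\<close> partition \<open>B\<close> into blocks of equal size, and the projection onto
\<open>B/I\<close> is a homomorphism for both operations. In the abelian brace \<open>B/I\<close> the classes of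
\<open>\<lambda>\<^sub>a(b) = -a + ab\<close> and of \<open>\<lambda>\<^sub>a(b)\<^sup>-\<^sup>1ab\<close> are those of \<open>b\<close> and \<open>a\<close>, so \<open>r\<^sub>B\<close> maps \<open>aI \<times> bI\<close> into
\<open>bI \<times> aI\<close>. Equality holds because \<open>r\<^sub>B\<close> is onto: \<open>(y, x)\<close> is the image of \<open>(a, a\<^sup>-\<^sup>1yx)\<close> with
\<open>a = yx - y\<close>, and this preimage lies in the right block by the first part.\<close>

lemma (in group) l_coset_eqpoll:
  assumes "H \<subseteq> carrier G" "x \<in> carrier G"
  shows "H \<approx> x <#\<^bsub>G\<^esub> H"
proof -
  have "bij_betw ((\<otimes>) x) H (x <#\<^bsub>G\<^esub> H)"
    using inj_on_g'[OF assms] by (auto simp: bij_betw_def l_coset_def)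
  thus ?thesis unfolding eqpoll_def by blast
qed

lemma (in group) lcosets_uniform_partition:
  assumes "subgroup H G"
  shows "uniform_partition (carrier G) (lcosets H)"
  unfolding uniform_partition_def partition_on_def
proof (intro conjI ballI)
  show "\<Union> (lcosets H) = carrier G" using lcosets_part_G[OF assms] .
  show "disjoint (lcosets H)" using lcos_disjoint[OF assms] by (auto simp: disjoint_def)
  show "{} \<notin> lcosets H" using lcos_self[OF _ assms] by (auto simp: LCOSETS_def)
next
  fix U V assume "U \<in> lcosets H" "V \<in> lcosets H"
  hence "H \<approx> U" "H \<approx> V"
    using l_coset_eqpoll subgroup.subset[OF assms] by (auto simp: LCOSETS_def)
  thus "U \<approx> V" using eqpoll_sym eqpoll_trans by blast
qed

lemma (in group) two_le_card_lcosets: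
  assumes "subgroup H G" "H \<noteq> carrier G" "finite (carrier G)"
  shows "finite (lcosets H)" "2 \<le> card (lcosets H)"
proof -
  show fin: "finite (lcosets H)"
    using lcosets_subset_PowG[OF assms(1)] assms(3) finite_subset by blast
  obtain b where b: "b \<in> carrier G" "b \<notin> H" using assms(1,2) subgroup.subset by blast
  have "H \<in> lcosets H"
    using lcos_mult_one[OF subgroup.subset[OF assms(1)]] by (force simp: LCOSETS_def)
  moreover have "b <#\<^bsub>G\<^esub> H \<in> lcosets H" using b by (auto simp: LCOSETS_def)
  moreover have "H \<noteq> b <#\<^bsub>G\<^esub> H" using lcos_self[OF b(1) assms(1)] b(2) by blast
  ultimately have "card {H, (b <#\<^bsub>G\<^esub> H)} \<le> card (lcosets H)"
    by (intro card_mono fin) auto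
  thus "2 \<le> card (lcosets H)" using \<open>H \<noteq> b <#\<^bsub>G\<^esub> H\<close> by simp
qed

locale skew_left_brace =
  fixes A M :: "'a monoid"
  assumes skew_brace: "skew_brace A M"
begin

sublocale A: group A
  using skew_brace by (simp add: skew_brace_def)

sublocale M: group M
  using skew_brace by (simp add: skew_brace_def)

lemma carrier_M [simp]: "carrier M = carrier A"
  using skew_brace by (simp add: skew_brace_def)

lemma brace_distrib:
  "\<lbrakk>a \<in> carrier A; b \<in> carrier A; c \<in> carrier A\<rbrakk> \<Longrightarrow>
     a \<otimes>\<^bsub>M\<^esub> (b \<otimes>\<^bsub>A\<^esub> c) = ((a \<otimes>\<^bsub>M\<^esub> b) \<otimes>\<^bsub>A\<^esub> inv\<^bsub>A\<^esub> a) \<otimes>\<^bsub>A\<^esub> (a \<otimes>\<^bsub>M\<^esub> c)"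
  using skew_brace by (simp add: skew_brace_def)

lemma M_m_closed [simp]: "\<lbrakk>x \<in> carrier A; y \<in> carrier A\<rbrakk> \<Longrightarrow> x \<otimes>\<^bsub>M\<^esub> y \<in> carrier A"
  using M.m_closed by simp

lemma M_inv_closed [simp]: "x \<in> carrier A \<Longrightarrow> inv\<^bsub>M\<^esub> x \<in> carrier A"
  using M.inv_closed by simp

lemma one_M: "\<one>\<^bsub>M\<^esub> = \<one>\<^bsub>A\<^esub>"
proof -
  have "\<one>\<^bsub>A\<^esub> = \<one>\<^bsub>M\<^esub> \<otimes>\<^bsub>M\<^esub> (\<one>\<^bsub>A\<^esub> \<otimes>\<^bsub>A\<^esub> \<one>\<^bsub>A\<^esub>)"
    by simp
  also have "\<dots> = inv\<^bsub>A\<^esub> \<one>\<^bsub>M\<^esub>"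
    using brace_distrib[of "\<one>\<^bsub>M\<^esub>" "\<one>\<^bsub>A\<^esub>" "\<one>\<^bsub>A\<^esub>"] M.one_closed by simp
  finally show ?thesis
    using M.one_closed by (metis A.inv_inv A.inv_one carrier_M)
qed

lemma brace_lambda_closed [simp]:
  "\<lbrakk>a \<in> carrier A; b \<in> carrier A\<rbrakk> \<Longrightarrow> brace_lambda A M a b \<in> carrier A"
  by (simp add: brace_lambda_def)

lemma mult_M_eq_mult_lambda:
  "\<lbrakk>a \<in> carrier A; b \<in> carrier A\<rbrakk> \<Longrightarrow> a \<otimes>\<^bsub>M\<^esub> b = a \<otimes>\<^bsub>A\<^esub> brace_lambda A M a b"
  by (simp add: brace_lambda_def A.m_assoc[symmetric])

lemma mult_A_eq_mult_lambda:
  assumes a: "a \<in> carrier A" and b: "b \<in> carrier A"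
  shows "a \<otimes>\<^bsub>A\<^esub> b = a \<otimes>\<^bsub>M\<^esub> brace_lambda A M (inv\<^bsub>M\<^esub> a) b"
proof -
  have "inv\<^bsub>M\<^esub> a \<otimes>\<^bsub>M\<^esub> (a \<otimes>\<^bsub>A\<^esub> b)
      = (\<one>\<^bsub>A\<^esub> \<otimes>\<^bsub>A\<^esub> inv\<^bsub>A\<^esub> (inv\<^bsub>M\<^esub> a)) \<otimes>\<^bsub>A\<^esub> (inv\<^bsub>M\<^esub> a \<otimes>\<^bsub>M\<^esub> b)"
    using brace_distrib[of "inv\<^bsub>M\<^esub> a" a b] a b M.l_inv[of a] by (simp add: one_M)
  also have "\<dots> = brace_lambda A M (inv\<^bsub>M\<^esub> a) b"
    using a b by (simp add: brace_lambda_def)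
  finally show ?thesis
    using a b by (metis M.inv_solve_left M_m_closed A.m_closed carrier_M M_inv_closed)
qed

lemma brace_solution_closed:
  "\<lbrakk>a \<in> carrier A; b \<in> carrier A\<rbrakk> \<Longrightarrow> brace_solution A M (a, b) \<in> carrier A \<times> carrier A"
  by (simp add: brace_solution_def)

lemma brace_solution_surj:
  assumes x: "x \<in> carrier A" and y: "y \<in> carrier A"
  shows "\<exists>a\<in>carrier A. \<exists>b\<in>carrier A. brace_solution A M (a, b) = (y, x)"
proof -
  \<comment> \<open>Solve \<open>ab = yx\<close> and \<open>-a + ab = y\<close> for \<open>a\<close> and \<open>b\<close>.\<close>
  define w where "w = y \<otimes>\<^bsub>M\<^esub> x"
  define a where "a = w \<otimes>\<^bsub>A\<^esub> inv\<^bsub>A\<^esub> y"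
  define b where "b = inv\<^bsub>M\<^esub> a \<otimes>\<^bsub>M\<^esub> w"
  have w: "w \<in> carrier A" and a: "a \<in> carrier A" and b: "b \<in> carrier A"
    by (simp_all add: w_def a_def b_def x y)
  have ab: "a \<otimes>\<^bsub>M\<^esub> b = w"
    using a w by (simp add: b_def M.m_assoc[symmetric])
  hence lambda: "brace_lambda A M a b = y"
    using w y by (simp add: brace_lambda_def a_def A.inv_mult_group A.m_assoc)
  have "(inv\<^bsub>M\<^esub> y \<otimes>\<^bsub>M\<^esub> a) \<otimes>\<^bsub>M\<^esub> b = x"
    using a b x y ab by (simp add: M.m_assoc w_def M.m_assoc[symmetric, of "inv\<^bsub>M\<^esub> y"])
  with lambda a b show ?thesis by (auto simp: brace_solution_def)
qed

end

locale skew_brace_ideal = skew_left_brace +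
  fixes I :: "'a set"
  assumes ideal: "brace_ideal A M I"
begin

sublocale IA: normal I A
  using ideal by (simp add: brace_ideal_def)

sublocale IM: normal I M
  using ideal by (simp add: brace_ideal_def)

lemma brace_lambda_ideal: "\<lbrakk>a \<in> carrier A; i \<in> I\<rbrakk> \<Longrightarrow> brace_lambda A M a i \<in> I"
  using ideal by (auto simp: brace_ideal_def)

lemma l_coset_M_eq_l_coset_A:
  assumes x: "x \<in> carrier A"
  shows "x <#\<^bsub>M\<^esub> I = x <#\<^bsub>A\<^esub> I"
proof
  show "x <#\<^bsub>M\<^esub> I \<subseteq> x <#\<^bsub>A\<^esub> I"
    using x mult_M_eq_mult_lambda brace_lambda_ideal IA.subset by (force simp: l_coset_def)
  show "x <#\<^bsub>A\<^esub> I \<subseteq> x <#\<^bsub>M\<^esub> I"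
    using x mult_A_eq_mult_lambda brace_lambda_ideal IA.subset by (force simp: l_coset_def)
qed

lemma l_coset_M_eq_r_coset_A: "x \<in> carrier A \<Longrightarrow> x <#\<^bsub>M\<^esub> I = I #>\<^bsub>A\<^esub> x"
  using l_coset_M_eq_l_coset_A IA.coset_eq by simp

lemma r_coset_M_eq_r_coset_A: "x \<in> carrier A \<Longrightarrow> I #>\<^bsub>M\<^esub> x = I #>\<^bsub>A\<^esub> x"
  using l_coset_M_eq_r_coset_A IM.coset_eq by simp

lemma lcosets_M_eq: "{b <#\<^bsub>M\<^esub> I | b. b \<in> carrier A} = lcosets\<^bsub>M\<^esub> I"
  by (auto simp: LCOSETS_def)

definition quot :: "'a \<Rightarrow> 'a set" where
  "quot x = I #>\<^bsub>A\<^esub> x"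

sublocale Q: group "A Mod I"
  by (rule IA.factorgroup_is_group)

sublocale quot_A: group_hom A "A Mod I" quot
  unfolding group_hom_def group_hom_axioms_def quot_def[abs_def]
  using IA.r_coset_hom_Mod A.is_group Q.is_group by simp

lemma mem_l_coset_M_iff:
  assumes x: "x \<in> carrier A"
  shows "y \<in> x <#\<^bsub>M\<^esub> I \<longleftrightarrow> y \<in> carrier A \<and> quot y = quot x"
  unfolding l_coset_M_eq_r_coset_A[OF x] quot_def
  using A.repr_independence[OF _ x IA.subgroup_axioms] A.rcos_self[OF _ IA.subgroup_axioms]
    IA.elemrcos_carrier[OF A.is_group x] by metis

end

locale skew_brace_abelian_quotient = skew_brace_ideal +
  assumes abelian_quotient: "abelian_brace (A Mod I) (M Mod I)"
begin

sublocale Q: comm_group "A Mod I"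
proof (rule Q.group_comm_groupI)
  show "\<And>U V. \<lbrakk>U \<in> carrier (A Mod I); V \<in> carrier (A Mod I)\<rbrakk>
      \<Longrightarrow> U \<otimes>\<^bsub>A Mod I\<^esub> V = V \<otimes>\<^bsub>A Mod I\<^esub> U"
    using abelian_quotient by (simp add: abelian_brace_def del: mult_FactGroup)
qed

lemma set_mult_M_eq_mult_Mod:
  "\<lbrakk>U \<in> carrier (A Mod I); V \<in> carrier (A Mod I)\<rbrakk> \<Longrightarrow> U <#>\<^bsub>M\<^esub> V = U \<otimes>\<^bsub>A Mod I\<^esub> V"
  using abelian_quotient by (simp add: abelian_brace_def)

sublocale quot_M: group_hom M "A Mod I" quot
proof -
  have "quot \<in> hom M (A Mod I)"
  proof (rule homI)
    fix x y assume x: "x \<in> carrier M" and y: "y \<in> carrier M"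
    show "quot x \<in> carrier (A Mod I)" using x by simp
    have "quot (x \<otimes>\<^bsub>M\<^esub> y) = (I #>\<^bsub>M\<^esub> x) <#>\<^bsub>M\<^esub> (I #>\<^bsub>M\<^esub> y)"
      using x y IM.rcos_sum[of x y] by (simp add: quot_def r_coset_M_eq_r_coset_A)
    also have "\<dots> = quot x \<otimes>\<^bsub>A Mod I\<^esub> quot y"
      using x y set_mult_M_eq_mult_Mod[OF quot_A.hom_closed quot_A.hom_closed]
      by (simp add: quot_def r_coset_M_eq_r_coset_A del: mult_FactGroup)
    finally show "quot (x \<otimes>\<^bsub>M\<^esub> y) = quot x \<otimes>\<^bsub>A Mod I\<^esub> quot y" .
  qed
  thus "group_hom M (A Mod I) quot"
    by (simp add: group_hom_def group_hom_axioms_def)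
qed

lemma quot_brace_lambda:
  assumes a: "a \<in> carrier A" and b: "b \<in> carrier A"
  shows "quot (brace_lambda A M a b) = quot b"
proof -
  have "quot (brace_lambda A M a b)
      = inv\<^bsub>A Mod I\<^esub> quot a \<otimes>\<^bsub>A Mod I\<^esub> (quot a \<otimes>\<^bsub>A Mod I\<^esub> quot b)"
    using a b by (simp add: brace_lambda_def del: mult_FactGroup)
  also have "\<dots> = quot b"
    using a b by (simp add: Q.m_assoc[symmetric] del: mult_FactGroup one_FactGroup)
  finally show ?thesis .
qed

lemma quot_brace_solution:
  assumes a: "a \<in> carrier A" and b: "b \<in> carrier A"
  shows "map_prod quot quot (brace_solution A M (a, b)) = (quot b, quot a)"
proof -
  have "quot ((inv\<^bsub>M\<^esub> (brace_lambda A M a b) \<otimes>\<^bsub>M\<^esub> a) \<otimes>\<^bsub>M\<^esub> b)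
      = (inv\<^bsub>A Mod I\<^esub> quot b \<otimes>\<^bsub>A Mod I\<^esub> quot a) \<otimes>\<^bsub>A Mod I\<^esub> quot b"
    using a b by (simp add: quot_brace_lambda del: mult_FactGroup)
  also have "\<dots> = quot a"
    using a b by (simp add: Q.m_comm[of _ "quot a"] Q.m_assoc del: mult_FactGroup one_FactGroup)
  finally show ?thesis
    using a b by (simp add: brace_solution_def quot_brace_lambda)
qed

lemma brace_solution_image_l_cosets:
  assumes a: "a \<in> carrier A" and b: "b \<in> carrier A"
  shows "brace_solution A M ` ((a <#\<^bsub>M\<^esub> I) \<times> (b <#\<^bsub>M\<^esub> I)) = (b <#\<^bsub>M\<^esub> I) \<times> (a <#\<^bsub>M\<^esub> I)"
proof (intro equalityI subsetI)
  fix z assume "z \<in> brace_solution A M ` ((a <#\<^bsub>M\<^esub> I) \<times> (b <#\<^bsub>M\<^esub> I))"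
  then obtain a' b' where z: "z = brace_solution A M (a', b')"
    and a': "a' \<in> carrier A" "quot a' = quot a" and b': "b' \<in> carrier A" "quot b' = quot b"
    using mem_l_coset_M_iff a b by auto
  show "z \<in> (b <#\<^bsub>M\<^esub> I) \<times> (a <#\<^bsub>M\<^esub> I)"
    using quot_brace_solution[OF a'(1) b'(1)] brace_solution_closed[OF a'(1) b'(1)] a' b'
    by (auto simp: z mem_l_coset_M_iff a b)
next
  fix z assume "z \<in> (b <#\<^bsub>M\<^esub> I) \<times> (a <#\<^bsub>M\<^esub> I)"
  then obtain y x where z: "z = (y, x)"
    and y: "y \<in> carrier A" "quot y = quot b" and x: "x \<in> carrier A" "quot x = quot a"
    using mem_l_coset_M_iff a b by auto
  obtain a' b' where a': "a' \<in> carrier A" and b': "b' \<in> carrier A"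
    and r: "brace_solution A M (a', b') = (y, x)"
    using brace_solution_surj[OF x(1) y(1)] by blast
  have "quot a' = quot a" "quot b' = quot b"
    using quot_brace_solution[OF a' b'] x y by (simp_all add: r)
  with a' b' r show "z \<in> brace_solution A M ` ((a <#\<^bsub>M\<^esub> I) \<times> (b <#\<^bsub>M\<^esub> I))"
    by (force simp: z mem_l_coset_M_iff a b)
qed

end

theorem corollary4p15:
  fixes A M :: "'a monoid" and I :: "'a set"
  assumes "skew_brace A M"
    and "brace_ideal A M I"
    and "I \<noteq> carrier A"
    and "abelian_brace (A Mod I) (M Mod I)"
  shows "uniformly_P_decomposable (carrier A) (brace_solution A M)
            {b <#\<^bsub>M\<^esub> I | b. b \<in> carrier A}
       \<and> (\<forall>b\<in>carrier A. \<forall>b'\<in>carrier A.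
            brace_solution A M ` ((b <#\<^bsub>M\<^esub> I) \<times> (b' <#\<^bsub>M\<^esub> I))
              = (b' <#\<^bsub>M\<^esub> I) \<times> (b <#\<^bsub>M\<^esub> I))
       \<and> (\<forall>n. finite (carrier A) \<and> card {b <#\<^bsub>M\<^esub> I | b. b \<in> carrier A} = n
              \<longrightarrow> uniformly_n_decomposable (carrier A) (brace_solution A M) n)"
proof -
  interpret skew_brace_abelian_quotient A M I
    by unfold_locales (fact assms)+
  have image: "\<forall>b\<in>carrier A. \<forall>b'\<in>carrier A.
      brace_solution A M ` ((b <#\<^bsub>M\<^esub> I) \<times> (b' <#\<^bsub>M\<^esub> I)) = (b' <#\<^bsub>M\<^esub> I) \<times> (b <#\<^bsub>M\<^esub> I)"
    using brace_solution_image_l_cosets by blast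
  have decomposable: "uniformly_P_decomposable (carrier A) (brace_solution A M)
      {b <#\<^bsub>M\<^esub> I | b. b \<in> carrier A}"
    unfolding uniformly_P_decomposable_def
    using M.lcosets_uniform_partition[OF IM.subgroup_axioms] image
    by (simp add: lcosets_M_eq) (auto simp: LCOSETS_def)
  have "finite (carrier A) \<Longrightarrow> finite {b <#\<^bsub>M\<^esub> I | b. b \<in> carrier A}
      \<and> 2 \<le> card {b <#\<^bsub>M\<^esub> I | b. b \<in> carrier A}"
    using M.two_le_card_lcosets[OF IM.subgroup_axioms] assms(3) by (simp add: lcosets_M_eq)
  with decomposable image show ?thesis
    unfolding uniformly_n_decomposable_def by blast
qed

end
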